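(* For all integers $n\ge0$ and $p\ge0$, $$\mathcal{B}_{n,p}=\sum_{k=0}^{n+p}\binom{n+p}{k}\binom{n+p}{p}^{-1}\phi_{n+p-k}\,B_k^{(p)}-\sum_{k=1}^{p}\binom{n+k}{k}^{-1}\binom{p}{k}B_{n+k}^{(k)}.$$
   Context: $\phi_m$ denotes the $m$-th Bell number. The generalized Bernoulli numbers $B_m^{(\alpha)}$ are defined by $\left(\frac{t}{e^t-1}\right)^\alpha=\sum_{m\ge0}B_m^{(\alpha)}\frac{t^m}{m!}$. For an integer $p\ge0$, the $p$-Bell numbers $\mathcal{B}_{n,p}$ are defined by $\sum_{n\ge0}\mathcal{B}_{n,p}\frac{z^n}{n!}=\sum_{n\ge0}\binom{n+p}{p}^{-1}\frac{(e^z-1)^n}{n!}$. *)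

theory Defs
  imports "HOL-Combinatorics.Stirling" "HOL-Computational_Algebra.Formal_Power_Series"
begin

definition bell :: "nat \<Rightarrow> nat" where
  "bell m = (\<Sum>k\<le>m. Stirling m k)"

text \<open>The formal power series t/(e^t - 1), i.e. the inverse of (e^t - 1)/t.\<close>
definition bernoulli_fps :: "real fps" where
  "bernoulli_fps = inverse (fps_shift 1 (fps_exp 1 - 1))"

definition gen_bernoulli :: "nat \<Rightarrow> nat \<Rightarrow> real" where
  "gen_bernoulli m \<alpha> = fact m * fps_nth (bernoulli_fps ^ \<alpha>) m"

text \<open>Exponential generating function of the p-Bell numbers:
  sum_n binom(n+p,p)^(-1) (e^z-1)^n / n!, taken coefficientwise (each coefficient
  sum has only finitely many nonzero terms since (e^z-1)^n has subdegree n).\<close>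
definition pbell_egf :: "nat \<Rightarrow> real fps" where
  "pbell_egf p = Abs_fps (\<lambda>m. \<Sum>j. fps_nth
      (fps_const (inverse (real ((j + p) choose p)) / fact j) * (fps_exp 1 - 1) ^ j) m)"

definition pbell :: "nat \<Rightarrow> nat \<Rightarrow> real" where
  "pbell n p = fact n * fps_nth (pbell_egf p) n"

end

theory Submission
  imports Defs
begin

text \<open>
  Write E = e^t - 1. The p-Bell generating function is G = (\<Sum>j. p!/(j+p)! E^j), so
  E^p G = p! (e^E - (\<Sum>i<p. E^i/i!)), and e^E is the generating function of the Bell numbers.
  Multiplying by (t/(e^t-1))^p turns E^p into t^p and each E^i with i < p into
  t^i (t/(e^t-1))^(p-i); comparing the coefficients of t^(n+p) gives the identity.
  Since only coefficients up to degree n+p matter, all series in E are truncated to finite sums.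
\<close>

unbundle fps_syntax

lemma fps_exp_minus_one_eq_X_mult_shift:
  "(fps_exp 1 - 1 :: 'a::field_char_0 fps) = fps_X * fps_shift 1 (fps_exp 1 - 1)"
  by (rule fps_ext) auto

lemma fps_deriv_exp_minus_one_power:
  "fps_deriv ((fps_exp 1 - 1 :: 'a::field_char_0 fps) ^ Suc i) =
     fps_const (of_nat (Suc i)) * ((fps_exp 1 - 1) ^ Suc i + (fps_exp 1 - 1) ^ i)"
  by (subst fps_deriv_power) (simp add: algebra_simps)

lemma fps_exp_minus_one_power_nth:
  "fact m * ((fps_exp 1 - 1 :: 'a::field_char_0 fps) ^ j) $ m = fact j * of_nat (Stirling m j)"
proof (induction m arbitrary: j)
  case 0
  then show ?case by (cases j) auto
next
  case (Suc m)
  show ?case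
  proof (cases j)
    case 0
    then show ?thesis by simp
  next
    case (Suc i)
    let ?E = "fps_exp 1 - 1 :: 'a fps"
    have "fact (Suc m) * (?E ^ Suc i) $ Suc m = fact m * fps_deriv (?E ^ Suc i) $ m"
      by (simp only: fps_deriv_nth fact_Suc) (simp add: algebra_simps)
    also have "\<dots> = of_nat (Suc i) * (fact m * (?E ^ Suc i) $ m + fact m * (?E ^ i) $ m)"
      by (simp only: fps_deriv_exp_minus_one_power fps_mult_left_const_nth fps_add_nth)
        (simp add: algebra_simps)
    also have "\<dots> = of_nat (Suc i) * (fact (Suc i) * of_nat (Stirling m (Suc i))
                                      + fact i * of_nat (Stirling m i))"
      by (simp only: Suc.IH)
    also have "\<dots> = fact (Suc i) * of_nat (Stirling (Suc m) (Suc i))"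
      by (simp add: algebra_simps)
    finally show ?thesis
      using Suc by simp
  qed
qed

lemma fps_exp_minus_one_power_nth_less:
  "m < j \<Longrightarrow> ((fps_exp 1 - 1 :: 'a::field_char_0 fps) ^ j) $ m = 0"
  using fps_exp_minus_one_power_nth[of m j, where 'a = 'a] by (simp add: Stirling_less)

lemma bernoulli_fps_power_mult_exp_minus_one_power:
  "bernoulli_fps ^ i * (fps_exp 1 - 1) ^ i = fps_X ^ i"
proof -
  let ?S = "fps_shift 1 (fps_exp 1 - 1) :: real fps"
  have "bernoulli_fps * ?S = 1"
    unfolding bernoulli_fps_def by (rule inverse_mult_eq_1) simp
  moreover have "bernoulli_fps ^ i * (fps_X * ?S) ^ i = fps_X ^ i * (bernoulli_fps * ?S) ^ i"
    by (simp add: power_mult_distrib mult_ac)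
  ultimately show ?thesis
    by (subst fps_exp_minus_one_eq_X_mult_shift) simp
qed

lemma bernoulli_fps_power_nth: "(bernoulli_fps ^ \<alpha>) $ m = gen_bernoulli m \<alpha> / fact m"
  by (simp add: gen_bernoulli_def)

definition fps_exp_trunc :: "nat \<Rightarrow> 'a::field_char_0 fps \<Rightarrow> 'a fps" where
  "fps_exp_trunc N f = (\<Sum>i<N. fps_const (1 / fact i) * f ^ i)"

lemma fps_exp_trunc_exp_minus_one_nth:
  assumes "m < N"
  shows "fps_exp_trunc N (fps_exp 1 - 1 :: 'a::field_char_0 fps) $ m = of_nat (bell m) / fact m"
proof -
  have "fps_exp_trunc N (fps_exp 1 - 1 :: 'a fps) $ m = (\<Sum>i<N. of_nat (Stirling m i) / fact m)"
    unfolding fps_exp_trunc_def fps_sum_nth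
    by (intro sum.cong refl)
      (simp add: field_simps fps_exp_minus_one_power_nth[of m, where 'a = 'a, symmetric])
  also have "\<dots> = (\<Sum>i\<le>m. of_nat (Stirling m i) / fact m)"
    using assms by (intro sum.mono_neutral_right) (auto simp: Stirling_less)
  also have "\<dots> = of_nat (bell m) / fact m"
    by (simp add: bell_def sum_divide_distrib)
  finally show ?thesis .
qed

definition pbell_egf_trunc :: "nat \<Rightarrow> nat \<Rightarrow> real fps" where
  "pbell_egf_trunc n p = (\<Sum>j\<le>n. fps_const (fact p / fact (j + p)) * (fps_exp 1 - 1) ^ j)"

lemma inverse_binomial_div_fact:
  "inverse (real ((j + p) choose p)) / fact j = fact p / fact (j + p)"
  by (subst binomial_fact) (auto simp: field_simps)

lemma pbell_egf_trunc_nth: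
  assumes "m \<le> n"
  shows "pbell_egf_trunc n p $ m = pbell_egf p $ m"
proof -
  have "pbell_egf p $ m = (\<Sum>j. fact p / fact (j + p) * ((fps_exp 1 - 1) ^ j) $ m)"
    by (simp add: pbell_egf_def inverse_binomial_div_fact)
  also have "\<dots> = (\<Sum>j\<le>m. fact p / fact (j + p) * ((fps_exp 1 - 1) ^ j) $ m)"
    by (rule suminf_finite) (auto simp: fps_exp_minus_one_power_nth_less)
  also have "\<dots> = pbell_egf_trunc n p $ m"
    unfolding pbell_egf_trunc_def fps_sum_nth fps_mult_left_const_nth using assms
    by (intro sum.mono_neutral_left) (auto simp: fps_exp_minus_one_power_nth_less)
  finally show ?thesis ..
qed

lemma exp_minus_one_power_mult_pbell_egf_trunc:
  "(fps_exp 1 - 1) ^ p * pbell_egf_trunc n p =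
     fps_const (fact p) * (fps_exp_trunc (n + p + 1) (fps_exp 1 - 1) - fps_exp_trunc p (fps_exp 1 - 1))"
proof -
  define g :: "nat \<Rightarrow> real fps" where "g i = fps_const (1 / fact i) * (fps_exp 1 - 1) ^ i" for i
  have "(fps_exp 1 - 1) ^ p * pbell_egf_trunc n p = fps_const (fact p) * (\<Sum>j<n + 1. g (j + p))"
    unfolding pbell_egf_trunc_def g_def sum_distrib_left lessThan_Suc_atMost[symmetric] Suc_eq_plus1
    by (intro sum.cong refl) (simp add: power_add fps_const_mult[symmetric] algebra_simps)
  also have "(\<Sum>j<n + 1. g (j + p)) = sum g {p..<n + p + 1}"
    using sum.shift_bounds_nat_ivl[of g 0 p "n + 1"] by (simp add: lessThan_atLeast0 add_ac)
  also have "\<dots> = sum g {..<n + p + 1} - sum g {..<p}"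
    using sum_diff_nat_ivl[of 0 p "n + p + 1" g] by (simp add: lessThan_atLeast0)
  finally show ?thesis
    by (simp add: fps_exp_trunc_def g_def)
qed

lemma X_power_mult_pbell_egf_trunc:
  "fps_X ^ p * pbell_egf_trunc n p = fps_const (fact p) *
     (bernoulli_fps ^ p * fps_exp_trunc (n + p + 1) (fps_exp 1 - 1)
      - (\<Sum>i<p. fps_const (1 / fact i) * fps_X ^ i * bernoulli_fps ^ (p - i)))"
proof -
  have "bernoulli_fps ^ p * fps_exp_trunc p (fps_exp 1 - 1) =
      (\<Sum>i<p. fps_const (1 / fact i) * fps_X ^ i * bernoulli_fps ^ (p - i))"
    unfolding fps_exp_trunc_def sum_distrib_left
  proof (intro sum.cong refl)
    fix i assume "i \<in> {..<p}"
    then have "bernoulli_fps ^ p = bernoulli_fps ^ (p - i) * bernoulli_fps ^ i"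
      by (simp flip: power_add)
    then show "bernoulli_fps ^ p * (fps_const (1 / fact i) * (fps_exp 1 - 1) ^ i) =
        fps_const (1 / fact i) * fps_X ^ i * bernoulli_fps ^ (p - i)"
      by (simp add: mult_ac bernoulli_fps_power_mult_exp_minus_one_power)
  qed
  moreover have "fps_X ^ p * pbell_egf_trunc n p =
      bernoulli_fps ^ p * ((fps_exp 1 - 1) ^ p * pbell_egf_trunc n p)"
    by (simp flip: mult.assoc add: bernoulli_fps_power_mult_exp_minus_one_power)
  ultimately show ?thesis
    unfolding exp_minus_one_power_mult_pbell_egf_trunc by (simp add: algebra_simps)
qed

lemma pbell_eq_coeff_sums:
  "pbell n p = fact n * fact p *
     ((\<Sum>k=0..n+p. gen_bernoulli k p / fact k * (real (bell (n+p-k)) / fact (n+p-k)))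
      - (\<Sum>k=1..p. gen_bernoulli (n+k) k / (fact (n+k) * fact (p-k))))"
proof -
  have "pbell n p = fact n * (fps_X ^ p * pbell_egf_trunc n p) $ (n + p)"
    by (simp add: pbell_def pbell_egf_trunc_nth fps_X_power_mult_nth)
  also have "(fps_X ^ p * pbell_egf_trunc n p) $ (n + p) = fact p *
      ((bernoulli_fps ^ p * fps_exp_trunc (n + p + 1) (fps_exp 1 - 1)) $ (n + p)
       - (\<Sum>i<p. (bernoulli_fps ^ (p - i)) $ (n + p - i) / fact i))"
    unfolding X_power_mult_pbell_egf_trunc fps_mult_left_const_nth fps_sub_nth fps_sum_nth
    by (simp add: mult.assoc fps_X_power_mult_nth)
  also have "(bernoulli_fps ^ p * fps_exp_trunc (n + p + 1) (fps_exp 1 - 1)) $ (n + p) =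
      (\<Sum>k=0..n+p. gen_bernoulli k p / fact k * (real (bell (n+p-k)) / fact (n+p-k)))"
    unfolding fps_mult_nth
    by (intro sum.cong refl) (simp add: bernoulli_fps_power_nth fps_exp_trunc_exp_minus_one_nth)
  also have "(\<Sum>i<p. (bernoulli_fps ^ (p - i)) $ (n + p - i) / fact i) =
      (\<Sum>k=1..p. gen_bernoulli (n+k) k / (fact (n+k) * fact (p-k)))"
    by (rule sum.reindex_bij_witness[of _ "\<lambda>k. p - k" "\<lambda>i. p - i"])
      (auto simp: bernoulli_fps_power_nth)
  finally show ?thesis
    by (simp add: mult.assoc)
qed

lemma binomial_mult_inverse_binomial:
  assumes "k \<le> n + p"
  shows "real ((n + p) choose k) * inverse (real ((n + p) choose p)) =
    fact n * fact p / (fact k * fact (n + p - k))"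
  using assms by (simp add: binomial_fact)

lemma inverse_binomial_mult_binomial:
  assumes "k \<le> p"
  shows "inverse (real ((n + k) choose k)) * real (p choose k) =
    fact n * fact p / (fact (n + k) * fact (p - k))"
  using assms by (simp add: binomial_fact)

theorem mainTheorem18:
  fixes n p :: nat
  shows "pbell n p =
    (\<Sum>k=0..n+p. real ((n+p) choose k) * inverse (real ((n+p) choose p))
        * real (bell (n+p-k)) * gen_bernoulli k p)
    - (\<Sum>k=1..p. inverse (real ((n+k) choose k)) * real (p choose k) * gen_bernoulli (n+k) k)"
    (is "_ = ?rhs")
proof -
  have "pbell n p =
      (\<Sum>k=0..n+p. fact n * fact p / (fact k * fact (n+p-k)) * real (bell (n+p-k)) * gen_bernoulli k p)
      - (\<Sum>k=1..p. fact n * fact p / (fact (n+k) * fact (p-k)) * gen_bernoulli (n+k) k)"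
    unfolding pbell_eq_coeff_sums right_diff_distrib sum_distrib_left
    by (intro arg_cong2[where f = "(-)"] sum.cong refl) simp_all
  also have "\<dots> = ?rhs"
    by (intro arg_cong2[where f = "(-)"] sum.cong refl)
      (simp_all add: binomial_mult_inverse_binomial inverse_binomial_mult_binomial)
  finally show ?thesis .
qed

end
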